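(* Let $\Omega\subset\mathbb H^n$ be an open, horizontally bounded and (Euclidean) convex set. Then $$\mathcal D(\xi)\le\Bigl(\frac{\sqrt[4]{97}}{2}+\frac13\Bigr)\mathrm{dist}_H(\xi,\partial\Omega)\qquad\forall\xi\in\Omega,$$ where $\mathcal D(\xi)=\min\{\mathrm{dist}_H(\zeta,\partial\Omega\cap H_\zeta):\zeta\in\overline{B_H(\xi,\mathrm{dist}_H(\xi,\partial\Omega)/3)}\}$.
   Context: $\mathbb H^n=\mathbb C^n\times\mathbb R\cong\mathbb R^{2n+1}$ with real coordinates $(x,y,t)$, $z=x+iy$, group law $(z,t)\circ(z',t')=(z+z',t+t'+2\,\mathrm{Im}\langle z,z'\rangle)$, $\langle z,z'\rangle=\sum_j z_j\overline{z'_j}$. Horizontal plane at $\xi_0=(x_0,y_0,t_0)$: $H_{\xi_0}=\{(x,y,t):t=t_0+2(x\cdot y_0-x_0\cdot y)\}$. Gauge $N(z,t)=(|z|^4+t^2)^{1/4}$, $d_H(\xi,\zeta)=N(\zeta^{-1}\circ\xi)$, $B_H(\xi,r)=\{\zeta:d_H(\zeta,\xi)<r\}$, $\mathrm{dist}_H(\xi,A)=\inf_{\zeta\in A}d_H(\xi,\zeta)$, $\mathrm{diam}_H$ the $d_H$-diameter; $\Omega$ is horizontally bounded if $\sup\{\mathrm{diam}_H(\Omega\cap H_\xi):\xi\in\Omega\}<\infty$. *)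

theory Defs
  imports "HOL-Analysis.Analysis"
begin

text \<open>The Heisenberg group H^n = C^n x R; the index type 'n (finite) plays the role of {1..n}.
 A point is a pair (z, t) with z :: complex^'n, t :: real; x = Re z, y = Im z componentwise.\<close>

type_synonym 'n heis = "(complex^'n) \<times> real"

definition hinner :: "complex^'n::finite \<Rightarrow> complex^'n \<Rightarrow> complex" where
  "hinner z w = (\<Sum>j\<in>UNIV. z$j * cnj (w$j))"

definition hmult :: "'n::finite heis \<Rightarrow> 'n heis \<Rightarrow> 'n heis" where
  "hmult p q = (fst p + fst q, snd p + snd q + 2 * Im (hinner (fst p) (fst q)))"

definition hinv :: "'n::finite heis \<Rightarrow> 'n heis" where
  "hinv p = (- fst p, - snd p)"

definition gauge :: "'n::finite heis \<Rightarrow> real" where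
  "gauge p = (norm (fst p) ^ 4 + (snd p)^2) powr (1/4)"

definition dH :: "'n::finite heis \<Rightarrow> 'n heis \<Rightarrow> real" where
  "dH \<xi> \<zeta> = gauge (hmult (hinv \<zeta>) \<xi>)"

definition ballH :: "'n::finite heis \<Rightarrow> real \<Rightarrow> 'n heis set" where
  "ballH \<xi> r = {\<zeta>. dH \<zeta> \<xi> < r}"

definition distH :: "'n::finite heis \<Rightarrow> 'n heis set \<Rightarrow> real" where
  "distH \<xi> A = (INF \<zeta>\<in>A. dH \<xi> \<zeta>)"

definition hplane :: "'n::finite heis \<Rightarrow> 'n heis set" where
  "hplane \<xi>0 = {p. snd p = snd \<xi>0 + 2 * (\<Sum>j\<in>UNIV.
       Re (fst p $ j) * Im (fst \<xi>0 $ j) - Re (fst \<xi>0 $ j) * Im (fst p $ j))}"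

definition horiz_bounded :: "'n::finite heis set \<Rightarrow> bool" where
  "horiz_bounded \<Omega> \<longleftrightarrow> (\<exists>C. \<forall>\<xi>\<in>\<Omega>. \<forall>a\<in>\<Omega> \<inter> hplane \<xi>. \<forall>b\<in>\<Omega> \<inter> hplane \<xi>. dH a b \<le> C)"

definition Dfun :: "'n::finite heis set \<Rightarrow> 'n heis \<Rightarrow> real" where
  "Dfun \<Omega> \<xi> = (INF \<zeta>\<in>closure (ballH \<xi> (distH \<xi> (frontier \<Omega>) / 3)).
                   distH \<zeta> (frontier \<Omega> \<inter> hplane \<zeta>))"

end

theory Submission
  imports Defs
begin

text \<open>
  Fix \<open>\<xi> \<in> \<Omega>\<close> at gauge distance \<open>\<delta>\<close> from \<open>\<partial>\<Omega>\<close> and a boundary point \<open>\<eta>\<close> with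
  \<open>G = d\<^sub>H(\<xi>, \<eta>) < 1.01 \<delta>\<close>. By Euclidean convexity \<open>\<Omega>\<close> lies in an open half-space
  \<open>c \<bullet> x < \<beta>\<close> not containing \<open>\<eta>\<close>. In the coordinates \<open>x = \<xi> \<cdot> v\<close> the functional reads
  \<open>c \<bullet> \<xi> + a \<bullet> v\<^sub>z + b v\<^sub>t\<close>, so \<open>\<beta> - c \<bullet> \<xi> \<le> |a| G + |b| G\<^sup>2\<close>. The twisting term of the group
  law lets us pick \<open>\<zeta> = \<xi> \<cdot> (z, 0)\<close> with \<open>|z| = 3\<delta>/10\<close> (so \<open>\<zeta>\<close> lies in \<open>\<Omega>\<close> and in the
  ball of radius \<open>\<delta>/3\<close>) from which a horizontal line in the plane of \<open>\<zeta>\<close> approaches the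
  supporting hyperplane at rate \<open>|a| + 2 |b| |z|\<close>. It therefore leaves \<open>\<Omega>\<close> within gauge
  length \<open>9\<delta>/5\<close>, which is below the constant of the statement.

  Horizontal boundedness is only needed to guarantee \<open>\<partial>\<Omega> \<noteq> {}\<close>.
\<close>

definition J :: "complex^'n::finite \<Rightarrow> complex^'n" where
  "J z = (\<chi> j. - \<i> * z$j)"

lemma Im_hinner: "Im (hinner z w) = inner (J z) w"
  unfolding hinner_def J_def inner_vec_def by (simp add: inner_complex_def algebra_simps)

lemma J_J [simp]: "J (J z) = - z"
  unfolding J_def by (simp add: vec_eq_iff)

lemma J_add [simp]: "J (z + w) = J z + J w"
  unfolding J_def by (simp add: vec_eq_iff algebra_simps)

lemma J_minus [simp]: "J (- z) = - J z"
  unfolding J_def by (simp add: vec_eq_iff)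

lemma J_scaleR [simp]: "J (r *\<^sub>R z) = r *\<^sub>R J z"
  unfolding J_def by (simp add: vec_eq_iff scaleR_conv_of_real)

lemma norm_J [simp]: "norm (J z) = norm z"
  unfolding J_def norm_vec_def L2_set_def by (simp add: norm_mult)

lemma inner_J_commute: "inner (J z) w = - inner (J w) z"
  unfolding J_def inner_vec_def by (simp add: inner_complex_def sum_negf[symmetric] algebra_simps)

lemma inner_J_self [simp]: "inner (J z) z = 0" "inner z (J z) = 0"
  using inner_J_commute[of z z] by (simp_all add: inner_commute)

lemma hmult_eq: "hmult p q = (fst p + fst q, snd p + snd q + 2 * inner (J (fst p)) (fst q))"
  unfolding hmult_def Im_hinner ..

lemma hmult_zero_right [simp]: "hmult p (0, 0) = p"
  by (simp add: hmult_eq)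

lemma hmult_hinv_cancel [simp]:
  "hmult (hinv p) (hmult p q) = q" "hmult p (hmult (hinv p) q) = q"
  by (simp_all add: hmult_eq hinv_def inner_J_commute[of "fst p"] algebra_simps prod_eq_iff)

lemma hinv_hmult_hinv: "hinv (hmult (hinv q) p) = hmult (hinv p) q"
  by (simp add: hmult_eq hinv_def inner_J_commute[of "fst p"] algebra_simps prod_eq_iff)

lemma hmult_horizontal_assoc:
  "hmult (hmult p (z, 0)) (w, 0) = hmult p (z + w, 2 * inner (J z) w)"
  by (simp add: hmult_eq algebra_simps)

lemma inner_hmult:
  "inner c (hmult p v) = inner c p + inner (fst c + (2 * snd c) *\<^sub>R J (fst p)) (fst v) + snd c * snd v"
  by (simp add: hmult_eq inner_prod_def inner_add_left inner_add_right algebra_simps)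

lemma hmult_horizontal_in_hplane: "hmult p (w, 0) \<in> hplane p"
  unfolding hplane_def hmult_eq J_def inner_vec_def
  by (simp add: inner_complex_def sum_subtractf[symmetric] algebra_simps)

lemma gauge_nonneg: "0 \<le> gauge v"
  unfolding gauge_def by simp

lemma gauge_hinv [simp]: "gauge (hinv v) = gauge v"
  by (simp add: gauge_def hinv_def)

lemma powr_quarter_power4: "0 \<le> x \<Longrightarrow> (x ^ 4) powr (1/4) = (x::real)"
proof (cases "x = 0")
  case False
  assume "0 \<le> x"
  then have "(x ^ 4) powr (1/4) = (x powr 4) powr (1/4)" using False by (simp add: powr_realpow)
  also have "\<dots> = x powr (4 * (1/4))" by (rule powr_powr)
  finally show ?thesis using \<open>0 \<le> x\<close> by simp
qed simp

lemma powr_quarter_squared: "0 \<le> x \<Longrightarrow> (x powr (1/4)) ^ 2 = sqrt (x::real)"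
  using powr_add[of x "1/4" "1/4"] by (simp add: power2_eq_square powr_half_sqrt)

lemma gauge_horizontal [simp]: "gauge (w, 0) = norm w"
  by (simp add: gauge_def powr_quarter_power4)

lemma norm_le_gauge: "norm w \<le> gauge (w, t)"
  using powr_mono2[of "1/4" "norm w ^ 4" "norm w ^ 4 + t\<^sup>2"]
  by (simp add: gauge_def powr_quarter_power4)

lemma abs_le_gauge_squared: "\<bar>t\<bar> \<le> gauge (w, t) ^ 2"
proof -
  have "\<bar>t\<bar> \<le> sqrt (norm w ^ 4 + t\<^sup>2)"
    by (metis real_sqrt_abs real_sqrt_le_mono le_add_same_cancel2 norm_ge_zero zero_le_power)
  then show ?thesis
    by (simp add: gauge_def powr_quarter_squared)
qed

lemma gauge_dilate_le:
  assumes "0 \<le> l" "l \<le> 1"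
  shows "gauge (l *\<^sub>R w, l * t) \<le> gauge (w, t)"
proof -
  have "norm (l *\<^sub>R w) ^ 4 \<le> norm w ^ 4" "(l * t)\<^sup>2 \<le> t\<^sup>2"
    using assms by (simp_all add: power_mult_distrib mult_left_le_one_le power_le_one)
  then have "norm (l *\<^sub>R w) ^ 4 + (l * t)\<^sup>2 \<le> norm w ^ 4 + t\<^sup>2"
    by linarith
  then show ?thesis
    unfolding gauge_def fst_conv snd_conv by (intro powr_mono2) auto
qed

lemma dH_sym: "dH p q = dH q p"
  unfolding dH_def by (metis gauge_hinv hinv_hmult_hinv)

lemma dH_hmult_left [simp]: "dH (hmult p v) p = gauge v"
  unfolding dH_def by simp

lemma dH_eq_gauge: "dH p q = gauge (hmult (hinv p) q)"
  using dH_def dH_sym by metis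

lemma dH_nonneg: "0 \<le> dH p q"
  by (simp add: dH_def gauge_nonneg)

lemma bdd_below_dH: "bdd_below (dH p ` A)"
  by (rule bdd_belowI2[of _ 0]) (rule dH_nonneg)

lemma distH_le_dH: "x \<in> A \<Longrightarrow> distH p A \<le> dH p x"
  unfolding distH_def using bdd_below_dH by (rule cINF_lower)

lemma distH_greatest: "A \<noteq> {} \<Longrightarrow> (\<And>x. x \<in> A \<Longrightarrow> r \<le> dH p x) \<Longrightarrow> r \<le> distH p A"
  unfolding distH_def by (rule cINF_greatest)

lemma distH_less_iff: "A \<noteq> {} \<Longrightarrow> distH p A < r \<longleftrightarrow> (\<exists>x\<in>A. dH p x < r)"
  unfolding distH_def by (rule cINF_less_iff[OF _ bdd_below_dH])

text \<open>The distance to the empty set is the unspecified real \<open>Inf {}\<close>, hence the form of the bound.\<close>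
lemma bdd_below_distH: "bdd_below ((\<lambda>p. distH p (A p)) ` S)"
proof (rule bdd_belowI2[of _ "min 0 (Inf {})"])
  fix p
  show "min 0 (Inf {}) \<le> distH p (A p)"
  proof (cases "A p = {}")
    case False
    then have "0 \<le> distH p (A p)"
      using distH_greatest dH_nonneg by metis
    then show ?thesis by simp
  qed (simp add: distH_def)
qed

lemma Dfun_le:
  "\<zeta> \<in> closure (ballH \<xi> (distH \<xi> (frontier \<Omega>) / 3)) \<Longrightarrow>
    Dfun \<Omega> \<xi> \<le> distH \<zeta> (frontier \<Omega> \<inter> hplane \<zeta>)"
  unfolding Dfun_def using bdd_below_distH by (rule cINF_lower)

lemma continuous_on_interval_meets_frontier:
  fixes \<gamma> :: "real \<Rightarrow> 'a::topological_space"
  assumes "continuous_on {0..s} \<gamma>" "0 \<le> s" "\<gamma> 0 \<in> S" "\<gamma> s \<notin> S"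
  shows "\<exists>l\<in>{0..s}. \<gamma> l \<in> frontier S"
proof -
  have "connected (\<gamma> ` {0..s})"
    using assms(1) by (rule connected_continuous_image) simp
  moreover have "\<gamma> ` {0..s} \<inter> S \<noteq> {}" "\<gamma> ` {0..s} - S \<noteq> {}"
    using assms(2-4) by force+
  ultimately show ?thesis
    using connected_Int_frontier by blast
qed

lemma open_inner_le_imp_less:
  fixes c :: "'a::real_inner"
  assumes "open S" "x \<in> S" "c \<noteq> 0" "\<forall>y\<in>S. inner c y \<le> b"
  shows "inner c x < b"
proof -
  obtain e where e: "e > 0" "ball x e \<subseteq> S"
    using assms(1,2) open_contains_ball by blast
  define y where "y = x + (e / 2 / norm c) *\<^sub>R c"
  have "y \<in> S"
    using e assms(3) by (auto simp: y_def dist_norm)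
  moreover have "inner c y = inner c x + e / 2 * norm c"
    using assms(3) by (simp add: y_def inner_add_right dot_square_norm power2_eq_square)
  moreover have "0 < e / 2 * norm c"
    using e assms(3) by simp
  ultimately show ?thesis
    using assms(4) by fastforce
qed

text \<open>Along \<open>l \<mapsto> \<xi> \<cdot> (l v\<^sub>z, l v\<^sub>t)\<close>, \<open>0 \<le> l \<le> 1\<close>, the gauge distance to \<open>\<xi>\<close> stays below that of \<open>\<xi> \<cdot> v = p\<close>.\<close>
lemma exists_frontier_dH_le:
  assumes "\<xi> \<in> \<Omega>" "p \<notin> \<Omega>"
  shows "\<exists>x\<in>frontier \<Omega>. dH \<xi> x \<le> dH p \<xi>"
proof -
  define v where "v = hmult (hinv \<xi>) p"
  define \<gamma> where "\<gamma> l = hmult \<xi> (l *\<^sub>R fst v, l * snd v)" for l :: real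
  have "continuous_on {0..1} \<gamma>"
    unfolding \<gamma>_def hmult_eq by (intro continuous_intros)
  moreover have "\<gamma> 0 = \<xi>" "\<gamma> 1 = p"
    by (simp_all add: \<gamma>_def v_def)
  ultimately obtain l where l: "l \<in> {0..1}" "\<gamma> l \<in> frontier \<Omega>"
    using continuous_on_interval_meets_frontier[of 1 \<gamma> \<Omega>] assms by auto
  have "dH \<xi> (\<gamma> l) = gauge (l *\<^sub>R fst v, l * snd v)"
    by (simp add: dH_sym[of \<xi>] \<gamma>_def)
  also have "\<dots> \<le> gauge v"
    using l gauge_dilate_le[of l "fst v" "snd v"] by simp
  also have "\<dots> = dH p \<xi>"
    by (simp add: v_def dH_def)
  finally show ?thesis
    using l by blast
qed

lemma mem_if_dH_less_distH_frontier:
  assumes "\<xi> \<in> \<Omega>" "dH p \<xi> < distH \<xi> (frontier \<Omega>)"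
  shows "p \<in> \<Omega>"
proof (rule ccontr)
  assume "p \<notin> \<Omega>"
  then obtain x where "x \<in> frontier \<Omega>" "dH \<xi> x \<le> dH p \<xi>"
    using exists_frontier_dH_le assms(1) by blast
  then show False
    using assms(2) distH_le_dH[of x "frontier \<Omega>" \<xi>] by linarith
qed

lemma dist_hmult_le:
  assumes "gauge v \<le> 1"
  shows "dist (hmult p v) p \<le> (2 + 2 * norm (fst p)) * gauge v"
proof -
  have horizontal: "norm (fst v) \<le> gauge v"
    using norm_le_gauge[of "fst v" "snd v"] by simp
  have "\<bar>snd v\<bar> \<le> gauge v ^ 2"
    using abs_le_gauge_squared[of "snd v" "fst v"] by simp
  also have "\<dots> \<le> gauge v"
    using assms gauge_nonneg[of v] by (simp add: power2_eq_square mult_left_le_one_le)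
  finally have vertical: "\<bar>snd v\<bar> \<le> gauge v" .
  have "\<bar>inner (J (fst p)) (fst v)\<bar> \<le> norm (fst p) * norm (fst v)"
    using Cauchy_Schwarz_ineq2[of "J (fst p)" "fst v"] by simp
  also have "\<dots> \<le> norm (fst p) * gauge v"
    using horizontal by (rule mult_left_mono) simp
  finally have twist: "\<bar>inner (J (fst p)) (fst v)\<bar> \<le> norm (fst p) * gauge v" .
  have "hmult p v - p = (fst v, snd v + 2 * inner (J (fst p)) (fst v))"
    by (simp add: hmult_eq prod_eq_iff)
  then have "dist (hmult p v) p = norm (fst v, snd v + 2 * inner (J (fst p)) (fst v))"
    by (simp add: dist_norm)
  also have "\<dots> \<le> norm (fst v) + norm (snd v + 2 * inner (J (fst p)) (fst v))"
    by (rule norm_Pair_le)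
  also have "\<dots> \<le> (2 + 2 * norm (fst p)) * gauge v"
    using horizontal vertical twist by (simp add: algebra_simps)
  finally show ?thesis .
qed

lemma distH_frontier_pos:
  assumes "open \<Omega>" "\<xi> \<in> \<Omega>" "frontier \<Omega> \<noteq> {}"
  shows "0 < distH \<xi> (frontier \<Omega>)"
proof -
  have "\<xi> \<notin> frontier \<Omega>"
    using assms by (simp add: frontier_def interior_open)
  moreover have "open (- frontier \<Omega>)"
    using frontier_closed by blast
  ultimately obtain e where e: "e > 0" "\<And>y. dist y \<xi> < e \<Longrightarrow> y \<notin> frontier \<Omega>"
    by (metis open_dist ComplI ComplD)
  define r where "r = min 1 (e / (3 + 2 * norm (fst \<xi>)))"
  have r: "0 < r" "r \<le> 1" "r * (3 + 2 * norm (fst \<xi>)) \<le> e"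
    using e by (auto simp: r_def min_def field_simps add_pos_nonneg)
  have "r \<le> dH \<xi> \<eta>" if "\<eta> \<in> frontier \<Omega>" for \<eta>
  proof (rule ccontr)
    define v where "v = hmult (hinv \<xi>) \<eta>"
    assume "\<not> r \<le> dH \<xi> \<eta>"
    then have "gauge v < r"
      by (simp add: v_def dH_eq_gauge)
    then have "dist \<eta> \<xi> \<le> (2 + 2 * norm (fst \<xi>)) * r"
      using dist_hmult_le[of v \<xi>] r(2) gauge_nonneg[of v]
      by (simp add: v_def) (smt (verit) mult_left_mono norm_ge_zero)
    also have "\<dots> < e"
      using r by (simp add: algebra_simps)
    finally show False
      using e(2) that by blast
  qed
  then have "r \<le> distH \<xi> (frontier \<Omega>)"
    using assms(3) by (rule distH_greatest[rotated])
  then show ?thesis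
    using r by linarith
qed

lemma horiz_bounded_imp_not_UNIV:
  assumes "horiz_bounded (\<Omega> :: 'n::finite heis set)"
  shows "\<Omega> \<noteq> UNIV"
proof
  assume "\<Omega> = UNIV"
  moreover obtain C where "\<forall>\<xi>\<in>\<Omega>. \<forall>a\<in>\<Omega> \<inter> hplane \<xi>. \<forall>b\<in>\<Omega> \<inter> hplane \<xi>. dH a b \<le> C"
    using assms unfolding horiz_bounded_def by blast
  ultimately have C: "\<And>a b. a \<in> hplane (0, 0) \<Longrightarrow> b \<in> hplane ((0, 0) :: 'n heis) \<Longrightarrow> dH a b \<le> C"
    by blast
  obtain u :: "complex^'n" where u: "norm u = \<bar>C\<bar> + 1"
    using vector_choose_size[of "\<bar>C\<bar> + 1"] by auto
  have "dH (hmult (0, 0) (u, 0)) (0, 0) \<le> C"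
    using C hmult_horizontal_in_hplane hmult_zero_right by metis
  then show False
    using u by simp
qed

lemma unit_vector_aligned:
  fixes a :: "complex^'n::finite"
  obtains e where "norm e = 1" "inner a e = norm a" "inner a (J e) = 0"
proof (cases "a = 0")
  case True
  obtain e :: "complex^'n" where "norm e = 1"
    using vector_choose_size[of 1] by auto
  then show ?thesis
    using that True by simp
next
  case False
  show ?thesis
    by (rule that[of "a /\<^sub>R norm a"]) (use False in \<open>simp_all add: dot_square_norm power2_eq_square\<close>)
qed

lemma distH_horizontal_frontier_le:
  assumes "\<zeta> \<in> \<Omega>" "norm e = 1" "0 \<le> s" "hmult \<zeta> (s *\<^sub>R e, 0) \<notin> \<Omega>"
  shows "distH \<zeta> (frontier \<Omega> \<inter> hplane \<zeta>) \<le> s"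
proof -
  define q where "q l = hmult \<zeta> (l *\<^sub>R e, 0)" for l :: real
  have "continuous_on {0..s} q"
    unfolding q_def hmult_eq by (intro continuous_intros)
  then obtain l where l: "l \<in> {0..s}" "q l \<in> frontier \<Omega>"
    using continuous_on_interval_meets_frontier[of s q \<Omega>] assms by (auto simp: q_def)
  then have "q l \<in> frontier \<Omega> \<inter> hplane \<zeta>"
    by (simp add: q_def hmult_horizontal_in_hplane)
  then have "distH \<zeta> (frontier \<Omega> \<inter> hplane \<zeta>) \<le> dH \<zeta> (q l)"
    by (rule distH_le_dH)
  also have "dH \<zeta> (q l) = l"
    using l assms(2) by (simp add: q_def dH_sym[of \<zeta>])
  finally show ?thesis
    using l by simp
qed

lemma convex_horizontal_frontier_distH_le:
  fixes \<Omega> :: "'n::finite heis set"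
  assumes "open \<Omega>" "convex \<Omega>" "\<xi> \<in> \<Omega>" "\<eta> \<notin> \<Omega>"
    and sphere: "\<forall>z. norm z = \<rho> \<longrightarrow> hmult \<xi> (z, 0) \<in> \<Omega>"
    and "0 < \<rho>" "dH \<xi> \<eta> \<le> K" "(dH \<xi> \<eta>)\<^sup>2 \<le> 2 * \<rho> * K"
  shows "\<exists>z. norm z = \<rho> \<and> distH (hmult \<xi> (z, 0)) (frontier \<Omega> \<inter> hplane (hmult \<xi> (z, 0))) \<le> K"
proof -
  obtain c \<beta> where c: "c \<noteq> 0" "\<forall>x\<in>\<Omega>. inner c x \<le> \<beta>" "\<beta> \<le> inner c \<eta>"
    using separating_hyperplane_sets[OF assms(2) convex_singleton, of \<eta>] assms(3,4) by auto
  have below: "inner c x < \<beta>" if "x \<in> \<Omega>" for x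
    using open_inner_le_imp_less[OF assms(1) that c(1)] c(2) by blast
  define a where "a = fst c + (2 * snd c) *\<^sub>R J (fst \<xi>)"
  define b where "b = snd c"
  have affine: "inner c (hmult \<xi> v) = inner c \<xi> + inner a (fst v) + b * snd v" for v
    by (simp add: inner_hmult a_def b_def)
  obtain e where e: "norm e = 1" "inner a e = norm a" "inner a (J e) = 0"
    using unit_vector_aligned by blast
  define \<sigma> :: real where "\<sigma> = (if 0 \<le> b then 1 else -1)"
  have \<sigma>: "\<sigma> * b = \<bar>b\<bar>" "\<bar>\<sigma>\<bar> = 1"
    by (auto simp: \<sigma>_def)
  \<comment> \<open>\<open>J z = \<sigma> \<rho> e\<close>, so the twisting term \<open>2 s (J z \<bullet> e)\<close> of the group law has the sign of \<open>b\<close>\<close>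
  define z where "z = (- (\<sigma> * \<rho>)) *\<^sub>R J e"
  define \<zeta> where "\<zeta> = hmult \<xi> (z, 0)"
  have norm_z: "norm z = \<rho>"
    using e(1) \<sigma>(2) assms(6) by (simp add: z_def abs_mult)
  define g where "g = norm a + 2 * \<bar>b\<bar> * \<rho>"
  have "g \<noteq> 0"
  proof
    assume "g = 0"
    then have "a = 0" "b = 0"
      using assms(6) by (auto simp: g_def add_nonneg_eq_0_iff)
    then show False
      using c(1) by (simp add: a_def b_def prod_eq_iff)
  qed
  then have g: "0 < g"
    using assms(6) by (simp add: g_def order_le_neq_trans)
  have rate: "inner c (hmult \<zeta> (s *\<^sub>R e, 0)) = inner c \<xi> + s * g" for s
  proof -
    have "inner (J z) e = \<sigma> * \<rho>" "inner a z = 0"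
      using e by (simp_all add: z_def dot_square_norm)
    then show ?thesis
      using e(2) \<sigma>(1) by (simp add: \<zeta>_def hmult_horizontal_assoc affine g_def inner_add_right algebra_simps)
  qed
  define s where "s = (\<beta> - inner c \<xi>) / g"
  have "inner c (hmult \<zeta> (s *\<^sub>R e, 0)) = \<beta>"
    using g by (simp add: rate s_def)
  then have "hmult \<zeta> (s *\<^sub>R e, 0) \<notin> \<Omega>"
    using below by (metis less_irrefl)
  moreover have "0 \<le> s"
    using below[OF assms(3)] g by (simp add: s_def)
  ultimately have "distH \<zeta> (frontier \<Omega> \<inter> hplane \<zeta>) \<le> s"
    using sphere norm_z e(1) by (intro distH_horizontal_frontier_le) (auto simp: \<zeta>_def)
  also have "s \<le> K"
  proof -
    define v where "v = hmult (hinv \<xi>) \<eta>"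
    have G: "gauge v = dH \<xi> \<eta>"
      by (simp add: v_def dH_eq_gauge)
    have "\<beta> - inner c \<xi> \<le> inner a (fst v) + b * snd v"
      using c(3) affine[of v] by (simp add: v_def)
    also have "\<dots> \<le> norm a * norm (fst v) + \<bar>b\<bar> * \<bar>snd v\<bar>"
      using norm_cauchy_schwarz[of a "fst v"] abs_ge_self[of "b * snd v"] by (simp add: abs_mult)
    also have "\<dots> \<le> norm a * K + \<bar>b\<bar> * (2 * \<rho> * K)"
      using norm_le_gauge[of "fst v" "snd v"] abs_le_gauge_squared[of "snd v" "fst v"] assms(7,8) G
      by (intro add_mono mult_left_mono) auto
    also have "\<dots> = g * K"
      by (simp add: g_def algebra_simps)
    finally show ?thesis
      using g by (simp add: s_def divide_le_eq mult.commute)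
  qed
  finally show ?thesis
    using norm_z by (auto simp: \<zeta>_def)
qed

lemma nine_fifths_le_constant: "9/5 \<le> 97 powr (1/4) / 2 + (1/3 :: real)"
proof -
  have "(81::real) powr (1/4) \<le> 97 powr (1/4)"
    by (intro powr_mono2) auto
  moreover have "(81::real) powr (1/4) = 3"
    using powr_quarter_power4[of 3] by simp
  ultimately show ?thesis
    by simp
qed

theorem proposition4p4:
  fixes \<Omega> :: "'n::finite heis set"
  assumes "open \<Omega>" and "horiz_bounded \<Omega>" and "convex \<Omega>"
  shows "\<forall>\<xi>\<in>\<Omega>. Dfun \<Omega> \<xi> \<le> (97 powr (1/4) / 2 + 1/3) * distH \<xi> (frontier \<Omega>)"
proof
  fix \<xi> assume \<xi>: "\<xi> \<in> \<Omega>"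
  define \<delta> where "\<delta> = distH \<xi> (frontier \<Omega>)"
  have "frontier \<Omega> \<noteq> {}"
    using frontier_not_empty horiz_bounded_imp_not_UNIV[OF assms(2)] \<xi> by blast
  moreover have \<delta>: "0 < \<delta>"
    using distH_frontier_pos[OF assms(1) \<xi>] calculation by (simp add: \<delta>_def)
  ultimately obtain \<eta> where \<eta>: "\<eta> \<in> frontier \<Omega>" "dH \<xi> \<eta> < 101/100 * \<delta>"
    using distH_less_iff[of "frontier \<Omega>" \<xi> "101/100 * \<delta>"] by (auto simp: \<delta>_def)
  have "\<eta> \<notin> \<Omega>"
    using \<eta>(1) assms(1) by (simp add: frontier_def interior_open)
  moreover have "\<forall>z. norm z = 3/10 * \<delta> \<longrightarrow> hmult \<xi> (z, 0) \<in> \<Omega>"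
    using \<delta> mem_if_dH_less_distH_frontier[OF \<xi>] by (simp add: \<delta>_def)
  moreover have "(dH \<xi> \<eta>)\<^sup>2 \<le> 2 * (3/10 * \<delta>) * (9/5 * \<delta>)"
  proof -
    have "(dH \<xi> \<eta>)\<^sup>2 \<le> (101/100 * \<delta>)\<^sup>2"
      using \<eta>(2) dH_nonneg[of \<xi> \<eta>] by (simp add: power_mono)
    also have "\<dots> \<le> 27/25 * \<delta>\<^sup>2"
      unfolding power_mult_distrib by (intro mult_right_mono) (simp_all add: power2_eq_square)
    also have "\<dots> = 2 * (3/10 * \<delta>) * (9/5 * \<delta>)"
      by (simp add: power2_eq_square)
    finally show ?thesis .
  qed
  ultimately obtain z where z: "norm z = 3/10 * \<delta>"
    "distH (hmult \<xi> (z, 0)) (frontier \<Omega> \<inter> hplane (hmult \<xi> (z, 0))) \<le> 9/5 * \<delta>"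
    using convex_horizontal_frontier_distH_le[OF assms(1,3) \<xi>, of \<eta> "3/10 * \<delta>" "9/5 * \<delta>"] \<eta>(2) \<delta>
    by auto
  have "hmult \<xi> (z, 0) \<in> closure (ballH \<xi> (\<delta> / 3))"
    using z(1) \<delta> closure_subset by (force simp: ballH_def)
  then have "Dfun \<Omega> \<xi> \<le> 9/5 * \<delta>"
    using Dfun_le z(2) by (fastforce simp: \<delta>_def)
  also have "\<dots> \<le> (97 powr (1/4) / 2 + 1/3) * \<delta>"
    using nine_fifths_le_constant \<delta> by (intro mult_right_mono) auto
  finally show "Dfun \<Omega> \<xi> \<le> (97 powr (1/4) / 2 + 1/3) * distH \<xi> (frontier \<Omega>)"
    by (simp add: \<delta>_def)
qed

end
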